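(* Define $\alpha,\beta:[0,2\pi]\to\mathbb{R}^3$ and $\gamma:[0,\pi]\to\mathbb{R}^3$ by $\alpha(t)=(\cos t,\sin t,1)$, $\beta(t)=(\cos t,\sin t,-1)$, $\gamma(t)=\big(2\cos(2t)-1,\ 2\sin(2t),\ \tfrac98\cos t-\tfrac18\cos(3t)\big)$, and let $C=\operatorname{conv}\big(\alpha([0,2\pi])\cup\beta([0,2\pi])\cup\gamma([0,\pi])\big)\subseteq\mathbb{R}^3$. Then the cone $\mathcal{K}=\operatorname{cone}(C\times\{1\})\subseteq\mathbb{R}^4$ is not amenable.
   Context: $\operatorname{cone}S=\{\lambda x:x\in S,\lambda\ge0\}$. A face of a closed convex cone $\mathcal{K}$ is a closed convex subset $\mathcal{F}\subseteq\mathcal{K}$ such that whenever $x,y\in\mathcal{K}$ and $\alpha x+(1-\alpha)y\in\mathcal{F}$ for some $\alpha\in(0,1)$, then $x,y\in\mathcal{F}$. $\mathcal{K}$ is amenable if for every face $\mathcal{F}$ there exists $\kappa>0$ with $\operatorname{dist}(x,\mathcal{F})\le\kappa\operatorname{dist}(x,\mathcal{K})$ for all $x\in\operatorname{span}\mathcal{F}$. *)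

theory Defs
  imports "HOL-Analysis.Analysis"
begin

definition cone_of :: "'a::real_vector set \<Rightarrow> 'a set" where
  "cone_of S = {c *\<^sub>R x | c x. x \<in> S \<and> c \<ge> 0}"

definition is_face :: "'a::real_normed_vector set \<Rightarrow> 'a set \<Rightarrow> bool" where
  "is_face F K \<longleftrightarrow> closed F \<and> convex F \<and> F \<subseteq> K \<and>
     (\<forall>x\<in>K. \<forall>y\<in>K. \<forall>a. 0 < a \<and> a < 1 \<and> a *\<^sub>R x + (1 - a) *\<^sub>R y \<in> F \<longrightarrow> x \<in> F \<and> y \<in> F)"

definition amenable :: "'a::real_normed_vector set \<Rightarrow> bool" where
  "amenable K \<longleftrightarrow> (\<forall>F. is_face F K \<longrightarrow>
     (\<exists>\<kappa>>0. \<forall>x\<in>span F. infdist x F \<le> \<kappa> * infdist x K))"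

definition alpha_curve :: "real \<Rightarrow> real \<times> real \<times> real" where
  "alpha_curve t = (cos t, sin t, 1)"

definition beta_curve :: "real \<Rightarrow> real \<times> real \<times> real" where
  "beta_curve t = (cos t, sin t, -1)"

definition gamma_curve :: "real \<Rightarrow> real \<times> real \<times> real" where
  "gamma_curve t = (2 * cos (2 * t) - 1, 2 * sin (2 * t), 9/8 * cos t - 1/8 * cos (3 * t))"

definition C_set :: "(real \<times> real \<times> real) set" where
  "C_set = convex hull (alpha_curve ` {0..2*pi} \<union> beta_curve ` {0..2*pi} \<union> gamma_curve ` {0..pi})"

end

theory Submission
  imports Defs
begin

(* C lies in the half-space z <= 1, and its slice at z = 1 is the unit disk: among the
   generating curves only the upper circle alpha and the point gamma(0) reach that height. So the
   cone F over the disk is the face of K exposed by the hyperplane z = w. The curve gamma touches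
   this plane tangentially at gamma(0): for small t its horizontal distance from the disk is of
   order sin(t)^2, while its height falls short of 1 only by order sin(t)^4. The point X of
   span F lying above gamma(t) at height 1 therefore has distance at least sin(t)^2 from F but at
   most (3/2) sin(t)^4 from K, which rules out dist(X, F) <= kappa dist(X, K) for any kappa. *)

lemma cone_of_eq_cone_hull: "cone_of S = cone hull S"
  unfolding cone_of_def cone_hull_expl by blast

lemma is_face_if_closed_face_of:
  assumes "closed F" and face: "F face_of K"
  shows "is_face F K"
proof -
  have "x \<in> F \<and> y \<in> F"
    if "x \<in> K" "y \<in> K" "0 < a" "a < 1" and in_F: "a *\<^sub>R x + (1 - a) *\<^sub>R y \<in> F" for x y a
  proof (cases "x = y")
    case True
    with in_F show ?thesis by (simp flip: scaleR_add_left)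
  next
    case False
    have "a *\<^sub>R x + (1 - a) *\<^sub>R y = (1 - a) *\<^sub>R y + a *\<^sub>R x"
      by (simp add: add.commute)
    with False that have "a *\<^sub>R x + (1 - a) *\<^sub>R y \<in> open_segment y x"
      unfolding in_segment by blast
    with that face show ?thesis
      using face_ofD by blast
  qed
  moreover have "convex F" "F \<subseteq> K"
    using face by (simp_all add: face_of_imp_convex face_of_imp_subset)
  ultimately show ?thesis
    unfolding is_face_def using \<open>closed F\<close> by blast
qed

lemma convex_hull_Int_supporting_hyperplane:
  fixes S :: "'a::euclidean_space set"
  assumes "compact S" and le: "\<And>x. x \<in> S \<Longrightarrow> a \<bullet> x \<le> b"
  shows "convex hull S \<inter> {x. a \<bullet> x = b} = convex hull (S \<inter> {x. a \<bullet> x = b})"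
proof
  have "convex hull S \<subseteq> {x. a \<bullet> x \<le> b}"
    using le by (intro hull_minimal convex_halfspace_le) auto
  then have "convex hull S \<inter> {x. a \<bullet> x = b} face_of convex hull S"
    by (intro face_of_Int_supporting_hyperplane_le) auto
  then obtain S' where "S' \<subseteq> S" and S': "convex hull S \<inter> {x. a \<bullet> x = b} = convex hull S'"
    using \<open>compact S\<close> face_of_convex_hull_subset by metis
  moreover have "S' \<subseteq> {x. a \<bullet> x = b}"
    using hull_subset[of S' convex] unfolding S'[symmetric] by (rule subset_trans) simp
  ultimately show "convex hull S \<inter> {x. a \<bullet> x = b} \<subseteq> convex hull (S \<inter> {x. a \<bullet> x = b})"
    by (metis hull_mono le_inf_iff)
next
  have "convex hull (S \<inter> {x. a \<bullet> x = b}) \<subseteq> {x. a \<bullet> x = b}"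
    by (intro hull_minimal convex_hyperplane) simp
  then show "convex hull (S \<inter> {x. a \<bullet> x = b}) \<subseteq> convex hull S \<inter> {x. a \<bullet> x = b}"
    by (simp add: hull_mono)
qed

definition horiz :: "real \<times> real \<times> real \<Rightarrow> real \<times> real" where
  "horiz p = (fst p, fst (snd p))"

definition height :: "real \<times> real \<times> real \<Rightarrow> real" where
  "height p = snd (snd p)"

definition top_point :: "real \<times> real \<Rightarrow> real \<times> real \<times> real" where
  "top_point v = (fst v, snd v, 1)"

lemma horiz_Pair [simp]: "horiz (a, b, c) = (a, b)"
  and height_Pair [simp]: "height (a, b, c) = c"
  and top_point_Pair [simp]: "top_point (a, b) = (a, b, 1)"
  by (simp_all add: horiz_def height_def top_point_def)

lemma horiz_zero [simp]: "horiz 0 = 0"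
  and horiz_add [simp]: "horiz (p + q) = horiz p + horiz q"
  and horiz_scaleR [simp]: "horiz (c *\<^sub>R p) = c *\<^sub>R horiz p"
  by (simp_all add: horiz_def zero_prod_def)

lemma height_zero [simp]: "height 0 = 0"
  and height_add [simp]: "height (p + q) = height p + height q"
  and height_scaleR [simp]: "height (c *\<^sub>R p) = c * height p"
  by (simp_all add: height_def zero_prod_def)

lemma inner_height: "(0, 0, 1) \<bullet> p = height p"
  by (cases p) auto

lemma dist_horiz_le: "dist (horiz p) (horiz q) \<le> dist p q"
proof -
  have "dist (fst (snd p)) (fst (snd q)) \<le> dist (snd p) (snd q)"
    by (rule dist_fst_le)
  then show ?thesis
    unfolding horiz_def dist_Pair_Pair dist_prod_def[of p q]
    by (intro real_sqrt_le_mono add_left_mono power_mono) auto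
qed

lemma convex_hull_top_circle: "convex hull (top_point ` sphere 0 1) = top_point ` cball 0 1"
proof -
  define embed :: "real \<times> real \<Rightarrow> real \<times> real \<times> real" where "embed v = (fst v, snd v, 0)" for v
  have "linear embed"
    by (auto simp: embed_def linear_iff)
  have top_point_eq: "top_point ` S = (+) (0, 0, 1) ` embed ` S" for S
    by (auto simp: image_image embed_def top_point_def)
  have "convex hull sphere (0::real \<times> real) 1 = cball 0 1"
    using Krein_Milman_frontier[of "cball (0::real \<times> real) 1"] by simp
  then show ?thesis
    unfolding top_point_eq convex_hull_translation convex_hull_linear_image[OF \<open>linear embed\<close>, symmetric]
    by simp
qed

definition C_generators :: "(real \<times> real \<times> real) set" where
  "C_generators = alpha_curve ` {0..2*pi} \<union> beta_curve ` {0..2*pi} \<union> gamma_curve ` {0..pi}"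

lemma C_set_eq_convex_hull: "C_set = convex hull C_generators"
  by (simp add: C_set_def C_generators_def)

lemma compact_C_generators: "compact C_generators"
  unfolding C_generators_def alpha_curve_def beta_curve_def gamma_curve_def
  by (intro compact_Un compact_continuous_image continuous_intros) auto

lemma height_gamma_curve: "height (gamma_curve t) = 1 - (1 - cos t)\<^sup>2 * (2 + cos t) / 2"
  unfolding gamma_curve_def height_Pair cos_treble_cos
  by (simp add: power2_eq_square power3_eq_cube field_simps)

lemma norm_horiz_gamma_curve: "(norm (horiz (gamma_curve t)))\<^sup>2 = 1 + 8 * (sin t)\<^sup>2"
proof -
  have "(norm (horiz (gamma_curve t)))\<^sup>2 = (2 * cos (2 * t) - 1)\<^sup>2 + (2 * sin (2 * t))\<^sup>2"
    by (simp add: gamma_curve_def norm_Pair)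
  also have "\<dots> = 5 - 4 * cos (2 * t)"
    using sin_cos_squared_add[of "2 * t"] by algebra
  finally show ?thesis
    by (simp add: cos_double_sin)
qed

lemma norm_horiz_gamma_curve_ge: "1 + 2 * (sin t)\<^sup>2 \<le> norm (horiz (gamma_curve t))"
proof -
  define n where "n = norm (horiz (gamma_curve t))"
  have n: "n\<^sup>2 = 1 + 8 * (sin t)\<^sup>2"
    by (simp add: n_def norm_horiz_gamma_curve)
  have "n\<^sup>2 \<le> 3\<^sup>2" "1\<^sup>2 \<le> n\<^sup>2"
    using n abs_sin_le_one[of t] by (auto simp: abs_square_le_1)
  then have "n \<le> 3" "1 \<le> n"
    by (auto simp: n_def intro: power2_le_imp_le)
  have "8 * (sin t)\<^sup>2 = (n - 1) * (n + 1)"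
    using n by (simp add: power2_eq_square algebra_simps)
  also have "\<dots> \<le> (n - 1) * 4"
    using \<open>n \<le> 3\<close> \<open>1 \<le> n\<close> by (intro mult_left_mono) auto
  finally show ?thesis
    by (simp add: n_def)
qed

lemma height_gamma_curve_ge:
  assumes "0 \<le> cos t"
  shows "1 - 3/2 * sin t ^ 4 \<le> height (gamma_curve t)"
proof -
  have "1 - cos t \<le> (1 - cos t) * (1 + cos t)"
    using assms cos_le_one[of t] mult_left_mono[of 1 "1 + cos t" "1 - cos t"] by simp
  also have "\<dots> = (sin t)\<^sup>2"
    by (simp add: sin_squared_eq power2_eq_square algebra_simps)
  finally have "(1 - cos t)\<^sup>2 \<le> ((sin t)\<^sup>2)\<^sup>2"
    using cos_le_one[of t] by (intro power_mono) auto
  moreover have "2 + cos t \<le> 3"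
    using cos_le_one[of t] by simp
  ultimately have "(1 - cos t)\<^sup>2 * (2 + cos t) \<le> sin t ^ 4 * 3"
    using assms by (intro mult_mono) auto
  then show ?thesis
    unfolding height_gamma_curve by linarith
qed

lemma height_le_one_if_C_generators: "p \<in> C_generators \<Longrightarrow> height p \<le> 1"
proof -
  have "0 \<le> 2 + cos t" for t :: real
    using cos_ge_minus_one[of t] by linarith
  then have "0 \<le> (1 - cos t)\<^sup>2 * (2 + cos t)" for t :: real
    by simp
  then show "p \<in> C_generators \<Longrightarrow> height p \<le> 1"
    unfolding C_generators_def by (auto simp: alpha_curve_def beta_curve_def height_gamma_curve)
qed

lemma C_generators_Int_top: "C_generators \<inter> {p. height p = 1} = top_point ` sphere 0 1"
proof (intro equalityI subsetI)
  fix p assume "p \<in> C_generators \<inter> {p. height p = 1}"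
  then have top: "height p = 1" and "p \<in> C_generators"
    by auto
  then consider (alpha) t where "p = alpha_curve t" | (beta) t where "p = beta_curve t"
    | (gamma) t where "p = gamma_curve t"
    unfolding C_generators_def by blast
  then show "p \<in> top_point ` sphere 0 1"
  proof cases
    case alpha
    then have "p = top_point (cos t, sin t)"
      by (simp add: alpha_curve_def)
    moreover have "(cos t, sin t) \<in> sphere 0 1"
      by (simp add: dist_norm norm_Pair)
    ultimately show ?thesis
      by blast
  next
    case beta
    with top show ?thesis
      by (simp add: beta_curve_def)
  next
    case gamma
    have "(1 - cos t)\<^sup>2 * (2 + cos t) = 0"
      using top gamma by (simp add: height_gamma_curve)
    moreover have "2 + cos t \<noteq> 0"
      using cos_ge_minus_one[of t] by linarith
    ultimately have "cos t = 1"
      by simp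
    then have "sin t = 0"
      using sin_cos_squared_add[of t] by simp
    have "p = (2 * cos (2 * t) - 1, 2 * sin (2 * t), 1)"
      using top gamma by (simp add: gamma_curve_def)
    with \<open>cos t = 1\<close> \<open>sin t = 0\<close> have "p = top_point (1, 0)"
      by (simp add: cos_double sin_double)
    moreover have "(1, 0) \<in> sphere (0::real \<times> real) 1"
      by simp
    ultimately show ?thesis
      by blast
  qed
next
  fix p assume "p \<in> top_point ` sphere 0 1"
  then obtain a b where p: "p = (a, b, 1)" and "a\<^sup>2 + b\<^sup>2 = 1"
    by (auto simp: dist_norm norm_Pair)
  then obtain t where "0 \<le> t" "t < 2*pi" "a = cos t" "b = sin t"
    using sincos_total_2pi by metis
  then have "p = alpha_curve t" "t \<in> {0..2*pi}"
    by (simp_all add: p alpha_curve_def)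
  then show "p \<in> C_generators \<inter> {p. height p = 1}"
    by (simp add: C_generators_def alpha_curve_def)
qed

lemma height_le_one_if_C_set: "p \<in> C_set \<Longrightarrow> height p \<le> 1"
proof -
  have "C_set \<subseteq> {p. (0, 0, 1) \<bullet> p \<le> 1}"
    unfolding C_set_eq_convex_hull
    by (intro hull_minimal convex_halfspace_le) (simp add: subset_eq inner_height height_le_one_if_C_generators)
  then show "p \<in> C_set \<Longrightarrow> height p \<le> 1"
    by (auto simp: inner_height)
qed

lemma C_set_Int_top: "C_set \<inter> {p. height p = 1} = top_point ` cball 0 1"
proof -
  have "\<And>p. p \<in> C_generators \<Longrightarrow> (0, 0, 1) \<bullet> p \<le> 1"
    by (simp add: inner_height height_le_one_if_C_generators)
  from convex_hull_Int_supporting_hyperplane[OF compact_C_generators this]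
  have "C_set \<inter> {p. height p = 1} = convex hull (C_generators \<inter> {p. height p = 1})"
    by (simp only: C_set_eq_convex_hull inner_height)
  also have "\<dots> = top_point ` cball 0 1"
    by (simp only: C_generators_Int_top convex_hull_top_circle)
  finally show ?thesis .
qed

definition C_cone :: "((real \<times> real \<times> real) \<times> real) set" where
  "C_cone = cone_of (C_set \<times> {1})"

definition top_face :: "((real \<times> real \<times> real) \<times> real) set" where
  "top_face = {(p, w). height p = w \<and> norm (horiz p) \<le> w}"

lemma convex_C_cone: "convex C_cone"
  unfolding C_cone_def cone_of_eq_cone_hull C_set_eq_convex_hull
  by (intro convex_cone_hull convex_Times convex_convex_hull convex_singleton)

lemma scaleR_mem_C_cone:
  assumes "p \<in> C_set" and "0 \<le> c"
  shows "(c *\<^sub>R p, c) \<in> C_cone"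
proof -
  have "(c *\<^sub>R p, c) = c *\<^sub>R (p, 1::real)"
    by simp
  with assms show ?thesis
    unfolding C_cone_def cone_of_def by blast
qed

lemma height_le_if_C_cone:
  assumes "(p, w) \<in> C_cone"
  shows "height p \<le> w"
proof -
  obtain c q where "0 \<le> c" "q \<in> C_set" "p = c *\<^sub>R q" "w = c"
    using assms unfolding C_cone_def cone_of_def by auto
  then show ?thesis
    using height_le_one_if_C_set[of q] by (simp add: mult_left_le)
qed

lemma top_face_subset_C_cone: "top_face \<subseteq> C_cone"
proof (clarify)
  fix p w assume "(p, w) \<in> top_face"
  then have w: "height p = w" and "norm (horiz p) \<le> w"
    by (auto simp: top_face_def)
  have "0 \<le> w"
    using \<open>norm (horiz p) \<le> w\<close> norm_ge_zero[of "horiz p"] by linarith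
  obtain a b where p: "p = (a, b, w)"
    using w by (metis height_Pair prod.collapse)
  define v where "v = (a / w, b / w)"
  have "norm v \<le> 1 \<and> (p, w) = w *\<^sub>R (top_point v, 1)"
  proof (cases "w = 0")
    case True
    with \<open>norm (horiz p) \<le> w\<close> show ?thesis
      by (simp add: p v_def zero_prod_def)
  next
    case False
    with \<open>0 \<le> w\<close> have "norm v = norm (horiz p) / w"
      by (simp add: p v_def norm_Pair real_sqrt_divide power_divide add_divide_distrib[symmetric])
    with False \<open>0 \<le> w\<close> \<open>norm (horiz p) \<le> w\<close> show ?thesis
      by (simp add: p v_def)
  qed
  then have "top_point v \<in> C_set" and "(p, w) = w *\<^sub>R (top_point v, 1)"
    using C_set_Int_top by (auto simp: subset_eq)
  then show "(p, w) \<in> C_cone"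
    using scaleR_mem_C_cone[OF _ \<open>0 \<le> w\<close>] by (metis Pair_inject scaleR_Pair)
qed

lemma mem_top_face_if_C_cone:
  assumes "(p, w) \<in> C_cone" and "height p = w"
  shows "(p, w) \<in> top_face"
proof -
  obtain c q where "0 \<le> c" "q \<in> C_set" and "(p, w) = c *\<^sub>R (q, 1)"
    using assms(1) unfolding C_cone_def cone_of_def by blast
  then have pw: "p = c *\<^sub>R q" "w = c"
    by simp_all
  with \<open>height p = w\<close> have "c * height q = c"
    by simp
  show "(p, w) \<in> top_face"
  proof (cases "c = 0")
    case False
    with \<open>c * height q = c\<close> have "q \<in> C_set \<inter> {p. height p = 1}"
      using \<open>q \<in> C_set\<close> by simp
    then have "norm (horiz q) \<le> 1"
      unfolding C_set_Int_top by (auto simp: top_point_def horiz_def)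
    with \<open>0 \<le> c\<close> have "norm (horiz p) \<le> w"
      by (simp add: pw mult_left_le)
    with \<open>c * height q = c\<close> show ?thesis
      by (simp add: top_face_def pw)
  qed (simp add: top_face_def pw)
qed

lemma top_face_eq: "top_face = {X \<in> C_cone. height (fst X) = snd X}"
  using top_face_subset_C_cone mem_top_face_if_C_cone by (auto simp: top_face_def)

lemma closed_top_face: "closed top_face"
  unfolding top_face_def case_prod_unfold horiz_def height_def
  by (intro closed_Collect_conj closed_Collect_eq closed_Collect_le continuous_intros)

lemma is_face_top_face: "is_face top_face C_cone"
proof (rule is_face_if_closed_face_of[OF closed_top_face])
  have inner: "((0, 0, 1), -1) \<bullet> X = height (fst X) - snd X" for X :: "(real \<times> real \<times> real) \<times> real"
    by (cases X) (simp add: inner_height)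
  have "top_face = C_cone \<inter> {X. ((0, 0, 1), -1) \<bullet> X = 0}"
    unfolding top_face_eq inner by auto
  also have "\<dots> face_of C_cone"
  proof (intro face_of_Int_supporting_hyperplane_le convex_C_cone)
    show "((0, 0, 1), -1) \<bullet> X \<le> 0" if "X \<in> C_cone" for X
      using that height_le_if_C_cone[of "fst X" "snd X"] by (simp add: inner)
  qed
  finally show "top_face face_of C_cone" .
qed

lemma span_top_face: "(p, height p) \<in> span top_face"
proof -
  define n where "n = norm (horiz p) + \<bar>height p\<bar>"
  define e :: "real \<times> real \<times> real" where "e = (0, 0, 1)"
  have "horiz e = 0" "height e = 1"
    by (simp_all add: e_def zero_prod_def)
  moreover have "0 \<le> n" "norm (horiz p) \<le> height p + n"
    unfolding n_def by (simp, linarith)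
  ultimately have "(p + n *\<^sub>R e, height p + n) \<in> top_face" "(n *\<^sub>R e, n) \<in> top_face"
    by (simp_all add: top_face_def)
  then have "(p + n *\<^sub>R e, height p + n) - (n *\<^sub>R e, n) \<in> span top_face"
    by (intro span_diff span_base)
  then show ?thesis
    by simp
qed

lemma infdist_top_face_ge: "(norm (horiz p) - w) / 2 \<le> infdist (p, w) top_face"
proof -
  have bound: "(norm (horiz p) - w) / 2 \<le> dist (p, w) (q, u)" if "(q, u) \<in> top_face" for q u
  proof -
    have "norm (horiz q) \<le> u"
      using that by (simp add: top_face_def)
    have "dist (horiz p) (horiz q) \<le> dist (p, w) (q, u)"
      using dist_horiz_le[of p q] dist_fst_le[of "(p, w)" "(q, u)"] by simp
    moreover have "u - w \<le> dist (p, w) (q, u)"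
      using dist_snd_le[of "(p, w)" "(q, u)"] by (simp add: dist_real_def)
    moreover have "norm (horiz p) \<le> dist (horiz p) (horiz q) + norm (horiz q)"
      using norm_triangle_sub[of "horiz p" "horiz q"] by (simp add: dist_norm add.commute)
    ultimately have "norm (horiz p) - w \<le> 2 * dist (p, w) (q, u)"
      using \<open>norm (horiz q) \<le> u\<close> by linarith
    then show ?thesis
      by simp
  qed
  have "(0, 0) \<in> top_face"
    by (simp add: top_face_def)
  then have "top_face \<noteq> {}"
    by blast
  then show ?thesis
    unfolding infdist_notempty[OF \<open>top_face \<noteq> {}\<close>]
    by (rule cINF_greatest) (metis bound prod.collapse)
qed

lemma distances_above_gamma_curve:
  assumes "0 \<le> t" and "t \<le> pi / 2"
  defines "X \<equiv> (top_point (horiz (gamma_curve t)), 1)"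
  shows "X \<in> span top_face"
    and "(sin t)\<^sup>2 \<le> infdist X top_face"
    and "infdist X C_cone \<le> 3/2 * sin t ^ 4"
proof -
  obtain a b h where gamma: "gamma_curve t = (a, b, h)"
    by (metis prod.collapse)
  then have X: "X = ((a, b, 1), 1)"
    by (simp add: X_def)
  show "X \<in> span top_face"
    using span_top_face[of "(a, b, 1)"] by (simp add: X)
  show "(sin t)\<^sup>2 \<le> infdist X top_face"
    using infdist_top_face_ge[of "(a, b, 1)" 1] norm_horiz_gamma_curve_ge[of t] by (simp add: X gamma)
  have "gamma_curve t \<in> C_set"
    unfolding C_set_eq_convex_hull C_generators_def
    by (rule hull_inc) (use assms pi_gt_zero in auto)
  then have "h \<le> 1"
    using height_le_one_if_C_set by (fastforce simp: gamma)
  have "(gamma_curve t, 1) \<in> C_cone"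
    using scaleR_mem_C_cone[OF \<open>gamma_curve t \<in> C_set\<close>, of 1] by simp
  then have "infdist X C_cone \<le> dist X (gamma_curve t, 1)"
    by (rule infdist_le)
  also have "\<dots> = 1 - h"
    using \<open>h \<le> 1\<close> by (simp add: X gamma dist_Pair_Pair dist_real_def)
  also have "\<dots> \<le> 3/2 * sin t ^ 4"
    using height_gamma_curve_ge[of t] assms cos_ge_zero[of t] by (simp add: gamma)
  finally show "infdist X C_cone \<le> 3/2 * sin t ^ 4" .
qed

lemma top_face_no_error_bound:
  assumes "\<kappa> > 0"
  obtains X where "X \<in> span top_face" and "\<kappa> * infdist X C_cone < infdist X top_face"
proof -
  define t where "t = 1 / (2 * \<kappa> + 2)"
  have "0 < t" "t \<le> 1/2" "\<kappa> * t \<le> 1/2"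
    using \<open>\<kappa> > 0\<close> by (auto simp: t_def field_simps)
  then have "t \<le> pi / 2" "0 < sin t" "sin t \<le> t"
    using pi_gt3 by (auto intro: sin_gt_zero sin_x_le_x)
  define X where "X = (top_point (horiz (gamma_curve t)), 1::real)"
  note distances = distances_above_gamma_curve[OF less_imp_le[OF \<open>0 < t\<close>] \<open>t \<le> pi / 2\<close>, folded X_def]
  have "\<kappa> * (sin t)\<^sup>2 \<le> (\<kappa> * t) * t"
    using \<open>\<kappa> > 0\<close> \<open>0 < sin t\<close> \<open>sin t \<le> t\<close> by (simp add: power2_eq_square mult_mono)
  also have "\<dots> \<le> 1/4"
    using \<open>\<kappa> * t \<le> 1/2\<close> \<open>t \<le> 1/2\<close> \<open>0 < t\<close> \<open>\<kappa> > 0\<close> mult_mono[of "\<kappa> * t" "1/2" t "1/2"] by simp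
  finally have small: "\<kappa> * (sin t)\<^sup>2 \<le> 1/4" .
  have "\<kappa> * infdist X C_cone \<le> \<kappa> * (3/2 * sin t ^ 4)"
    using distances(3) \<open>\<kappa> > 0\<close> by simp
  also have "\<dots> = 3/2 * (\<kappa> * (sin t)\<^sup>2 * (sin t)\<^sup>2)"
    by (simp add: power4_eq_xxxx power2_eq_square)
  also have "\<dots> \<le> 3/2 * (1/4 * (sin t)\<^sup>2)"
    using small by (intro mult_left_mono mult_right_mono) auto
  also have "\<dots> < (sin t)\<^sup>2"
    using \<open>0 < sin t\<close> by simp
  also have "\<dots> \<le> infdist X top_face"
    by (rule distances(2))
  finally show ?thesis
    by (rule that[OF distances(1)])
qed

theorem proposition5p2:
  shows "\<not> amenable (cone_of (C_set \<times> {1::real}))"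
proof
  assume "amenable (cone_of (C_set \<times> {1::real}))"
  then obtain \<kappa> where "\<kappa> > 0"
    and error_bound: "\<forall>X\<in>span top_face. infdist X top_face \<le> \<kappa> * infdist X C_cone"
    using is_face_top_face unfolding amenable_def C_cone_def by blast
  obtain X where "X \<in> span top_face" and "\<kappa> * infdist X C_cone < infdist X top_face"
    using top_face_no_error_bound[OF \<open>\<kappa> > 0\<close>] .
  with error_bound show False
    by fastforce
qed

end
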